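(* Let $\rho\in(0,1)$ and $1\le r\le d$. Then every $Z\in T_{\rho,r}$ satisfies $$\frac{\|Z\|_1^2}{\|Z\|_2^2}\le\left(\frac{\rho+1}{\rho}\right)^2 r.$$
   Context: $H_d$ is the real vector space of Hermitian $d\times d$ matrices; $\|\cdot\|_1$ is the nuclear norm and $\|\cdot\|_2$ the Frobenius norm. For $Z\in H_d$ let $Z_r$ be a best rank-$r$ approximation of $Z$ in nuclear norm (keep the $r$ eigenvalues of largest modulus in the spectral decomposition), and $Z_c=Z-Z_r$, so $\|Z_c\|_1=\sigma_r(Z)=\inf\{\|Z-Y\|_1:\mathrm{rank}(Y)=r\}$. Define $T_{\rho,r}=\{Z\in H_d:\ \|Z_r\|_2>\frac{\rho}{\sqrt r}\|Z_c\|_1,\ \|Z\|_2=1\}$. *)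

theory Defs
  imports "HOL-Analysis.Analysis"
begin

text \<open>Hermitian d x d matrices are modelled as complex matrices of type complex^'n^'n,
  where d = CARD('n).\<close>

definition adjoint_mat :: "complex^'n^'n \<Rightarrow> complex^'n^'n" where
  "adjoint_mat A = (\<chi> i j. cnj (A $ j $ i))"

definition hermitian_mat :: "complex^'n^'n \<Rightarrow> bool" where
  "hermitian_mat A \<longleftrightarrow> adjoint_mat A = A"

definition unitary_mat :: "complex^'n^'n \<Rightarrow> bool" where
  "unitary_mat U \<longleftrightarrow> U ** adjoint_mat U = mat 1 \<and> adjoint_mat U ** U = mat 1"

definition diag_mat :: "real^'n \<Rightarrow> complex^'n^'n" where
  "diag_mat l = (\<chi> i j. if i = j then complex_of_real (l $ i) else 0)"

definition spectral_decomp :: "complex^'n^'n \<Rightarrow> complex^'n^'n \<Rightarrow> real^'n \<Rightarrow> bool" where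
  "spectral_decomp Z U l \<longleftrightarrow> unitary_mat U \<and> Z = U ** diag_mat l ** adjoint_mat U"

definition frob_norm :: "complex^'n^'n \<Rightarrow> real" where
  "frob_norm Z = sqrt (\<Sum>i\<in>UNIV. \<Sum>j\<in>UNIV. (cmod (Z $ i $ j))\<^sup>2)"

text \<open>Nuclear norm of a Hermitian matrix: the sum of the absolute values of its eigenvalues
  (= sum of singular values).\<close>
definition nuc_norm :: "complex^'n^'n \<Rightarrow> real" where
  "nuc_norm Z = (THE s. \<exists>U l. spectral_decomp Z U l \<and> s = (\<Sum>i\<in>UNIV. \<bar>l $ i\<bar>))"

text \<open>Zr is a best rank-r approximation of Z obtained by keeping the r eigenvalues of
  largest modulus in a spectral decomposition of Z.\<close>
definition eig_truncation :: "nat \<Rightarrow> complex^'n^'n \<Rightarrow> complex^'n^'n \<Rightarrow> bool" where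
  "eig_truncation r Z Zr \<longleftrightarrow>
     (\<exists>U l S. spectral_decomp Z U l \<and> card S = r \<and>
        (\<forall>i\<in>S. \<forall>j. j \<notin> S \<longrightarrow> \<bar>l $ j\<bar> \<le> \<bar>l $ i\<bar>) \<and>
        Zr = U ** diag_mat (\<chi> i. if i \<in> S then l $ i else 0) ** adjoint_mat U)"

definition T_set :: "real \<Rightarrow> nat \<Rightarrow> (complex^'n^'n) set" where
  "T_set \<rho> r = {Z. hermitian_mat Z \<and> frob_norm Z = 1 \<and>
     (\<exists>Zr. eig_truncation r Z Zr \<and> frob_norm Zr > \<rho> / sqrt (real r) * nuc_norm (Z - Zr))}"

end

theory Submission imports Defs begin

text \<open>Write \<open>Z = U diag(\<lambda>) U\<^sup>*\<close> and let \<open>S\<close> index the \<open>r\<close> eigenvalues of largest modulus,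
  so that \<open>\<parallel>Z\<^sub>r\<parallel>\<^sub>2\<close> is the \<open>\<ell>\<^sub>2\<close>-norm and \<open>\<parallel>Z\<^sub>c\<parallel>\<^sub>1\<close> the \<open>\<ell>\<^sub>1\<close>-norm of the eigenvalues outside \<open>S\<close>.
  By Cauchy-Schwarz \<open>\<parallel>Z\<^sub>r\<parallel>\<^sub>1 \<le> \<surd>r \<parallel>Z\<^sub>r\<parallel>\<^sub>2\<close>, and the cone condition gives \<open>\<rho> \<parallel>Z\<^sub>c\<parallel>\<^sub>1 < \<surd>r \<parallel>Z\<^sub>r\<parallel>\<^sub>2\<close>;
  adding, \<open>\<rho> \<parallel>Z\<parallel>\<^sub>1 \<le> (\<rho> + 1) \<surd>r \<parallel>Z\<^sub>r\<parallel>\<^sub>2 \<le> (\<rho> + 1) \<surd>r \<parallel>Z\<parallel>\<^sub>2\<close>.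

  The nuclear norm is defined by a definite description over all spectral decompositions,
  so one must show that \<open>\<Sum> |\<lambda>\<^sub>i|\<close> does not depend on the decomposition. For this, note that
  \<open>U f(diag \<lambda>) U\<^sup>*\<close> is independent of the decomposition when \<open>f\<close> is a polynomial, take \<open>f\<close> to
  interpolate \<open>|\<cdot>|\<close> on the eigenvalues of both decompositions, and compare traces.\<close>

lemma diag_mat_mult:
  fixes a b :: "real^'n"
  shows "diag_mat a ** diag_mat b = diag_mat (\<chi> i. a$i * b$i)"
proof -
  have "(\<Sum>k\<in>UNIV. (if i = k then complex_of_real (a$i) else 0) * (if k = j then complex_of_real (b$k) else 0))
     = (\<Sum>k\<in>UNIV. if k = i then (if i = j then complex_of_real (a$i * b$i) else 0) else 0)" for i j :: 'n
    by (rule sum.cong) auto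
  then show ?thesis by (simp add: vec_eq_iff matrix_matrix_mult_def diag_mat_def)
qed

lemma diag_mat_diff: "diag_mat a - diag_mat b = diag_mat (a - b)"
  by (simp add: vec_eq_iff diag_mat_def)

lemma matrix_add_rdistrib: "(A + B) ** C = A ** C + B ** C"
  by (simp add: vec_eq_iff matrix_matrix_mult_def sum.distrib distrib_right)

lemma matrix_diff_conj:
  fixes A B :: "'a::ring_1^'n^'n"
  shows "U ** A ** V - U ** B ** V = U ** (A - B) ** V"
proof -
  have "U ** (A - B) ** V + U ** B ** V = U ** A ** V"
    by (simp flip: matrix_add_ldistrib matrix_add_rdistrib)
  then show ?thesis
    by (simp add: diff_eq_eq)
qed

lemma mat_matrix_mult_commute:
  fixes A :: "'a::comm_semiring_1^'n^'n"
  shows "mat k ** A = A ** mat k"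
proof -
  have "(\<Sum>x\<in>UNIV. (if i = x then k else 0) * A $ x $ j) = (\<Sum>x\<in>UNIV. if x = i then k * A $ i $ j else 0)"
    and "(\<Sum>x\<in>UNIV. A $ i $ x * (if x = j then k else 0)) = (\<Sum>x\<in>UNIV. if x = j then k * A $ i $ j else 0)"
    for i j :: 'n
    by (rule sum.cong; auto simp: mult.commute)+
  then show ?thesis by (simp add: vec_eq_iff matrix_matrix_mult_def mat_def)
qed

lemma unitary_conj_mat:
  assumes "unitary_mat U"
  shows "U ** mat k ** adjoint_mat U = mat k"
proof -
  have "U ** mat k ** adjoint_mat U = mat k ** (U ** adjoint_mat U)"
    by (simp only: mat_matrix_mult_commute matrix_mul_assoc)
  then show ?thesis
    using assms by (simp add: unitary_mat_def)
qed

lemma unitary_conj_matrix_mult: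
  assumes "unitary_mat U"
  shows "U ** (A ** B) ** adjoint_mat U = (U ** A ** adjoint_mat U) ** (U ** B ** adjoint_mat U)"
proof -
  have "(U ** A ** adjoint_mat U) ** (U ** B ** adjoint_mat U)
      = (U ** A) ** ((adjoint_mat U ** U) ** (B ** adjoint_mat U))"
    by (simp only: matrix_mul_assoc)
  also have "\<dots> = U ** (A ** B) ** adjoint_mat U"
    using assms by (simp add: unitary_mat_def matrix_mul_assoc)
  finally show ?thesis by (rule sym)
qed

lemma adjoint_mat_mult: "adjoint_mat (A ** B) = adjoint_mat B ** adjoint_mat A"
  by (simp add: vec_eq_iff adjoint_mat_def matrix_matrix_mult_def mult.commute)

lemma adjoint_mat_adjoint_mat: "adjoint_mat (adjoint_mat A) = A"
  by (simp add: vec_eq_iff adjoint_mat_def)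

lemma adjoint_diag_mat: "adjoint_mat (diag_mat l) = diag_mat l"
  by (simp add: vec_eq_iff adjoint_mat_def diag_mat_def)

lemma trace_unitary_conj_diag:
  assumes "unitary_mat U"
  shows "trace (U ** diag_mat l ** adjoint_mat U) = complex_of_real (\<Sum>i\<in>UNIV. l$i)"
proof -
  have "trace (U ** diag_mat l ** adjoint_mat U) = trace (adjoint_mat U ** (U ** diag_mat l))"
    by (rule trace_mul_sym)
  also have "\<dots> = trace (diag_mat l)"
    using assms by (simp add: matrix_mul_assoc unitary_mat_def)
  finally show ?thesis by (simp add: trace_def diag_mat_def)
qed

definition diag_fun :: "(real \<Rightarrow> real) \<Rightarrow> real^'n \<Rightarrow> complex^'n^'n" where
  "diag_fun f l = diag_mat (\<chi> i. f (l$i))"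

definition spectral_calculus_consistent :: "complex^'n^'n \<Rightarrow> (real \<Rightarrow> real) \<Rightarrow> bool" where
  "spectral_calculus_consistent Z f \<longleftrightarrow>
     (\<forall>U l V m. spectral_decomp Z U l \<longrightarrow> spectral_decomp Z V m \<longrightarrow>
        U ** diag_fun f l ** adjoint_mat U = V ** diag_fun f m ** adjoint_mat V)"

lemma spectral_calculus_consistent_const: "spectral_calculus_consistent Z (\<lambda>x. c)"
proof -
  have const: "diag_fun (\<lambda>x. c) l = mat (complex_of_real c)" for l :: "real^'n"
    by (simp add: diag_fun_def diag_mat_def mat_def vec_eq_iff)
  show ?thesis
    by (auto simp: spectral_calculus_consistent_def spectral_decomp_def const unitary_conj_mat)
qed

lemma spectral_calculus_consistent_ident: "spectral_calculus_consistent Z (\<lambda>x. x)"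
  by (simp add: spectral_calculus_consistent_def spectral_decomp_def diag_fun_def)

lemma spectral_calculus_consistent_add:
  assumes "spectral_calculus_consistent Z f" and "spectral_calculus_consistent Z g"
  shows "spectral_calculus_consistent Z (\<lambda>x. f x + g x)"
proof -
  have add: "diag_fun (\<lambda>x. f x + g x) l = diag_fun f l + diag_fun g l" for l :: "real^'n"
    by (simp add: diag_fun_def diag_mat_def vec_eq_iff)
  show ?thesis
    unfolding spectral_calculus_consistent_def
  proof (intro allI impI)
    fix U l V m
    assume "spectral_decomp Z U l" and "spectral_decomp Z V m"
    with assms have "U ** diag_fun f l ** adjoint_mat U = V ** diag_fun f m ** adjoint_mat V"
      and "U ** diag_fun g l ** adjoint_mat U = V ** diag_fun g m ** adjoint_mat V"
      unfolding spectral_calculus_consistent_def by blast+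
    then show "U ** diag_fun (\<lambda>x. f x + g x) l ** adjoint_mat U
        = V ** diag_fun (\<lambda>x. f x + g x) m ** adjoint_mat V"
      by (simp only: add matrix_add_ldistrib matrix_add_rdistrib)
  qed
qed

lemma spectral_calculus_consistent_mult:
  assumes "spectral_calculus_consistent Z f" and "spectral_calculus_consistent Z g"
  shows "spectral_calculus_consistent Z (\<lambda>x. f x * g x)"
proof -
  have mult: "diag_fun (\<lambda>x. f x * g x) l = diag_fun f l ** diag_fun g l" for l :: "real^'n"
    by (simp add: diag_fun_def diag_mat_mult)
  show ?thesis
    unfolding spectral_calculus_consistent_def
  proof (intro allI impI)
    fix U l V m
    assume U: "spectral_decomp Z U l" and V: "spectral_decomp Z V m"
    with assms have "U ** diag_fun f l ** adjoint_mat U = V ** diag_fun f m ** adjoint_mat V"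
      and "U ** diag_fun g l ** adjoint_mat U = V ** diag_fun g m ** adjoint_mat V"
      unfolding spectral_calculus_consistent_def by blast+
    moreover have "unitary_mat U" and "unitary_mat V"
      using U V by (simp_all add: spectral_decomp_def)
    ultimately show "U ** diag_fun (\<lambda>x. f x * g x) l ** adjoint_mat U
        = V ** diag_fun (\<lambda>x. f x * g x) m ** adjoint_mat V"
      by (simp only: mult unitary_conj_matrix_mult)
  qed
qed

lemma spectral_calculus_consistent_sum:
  "finite A \<Longrightarrow> (\<And>s. s \<in> A \<Longrightarrow> spectral_calculus_consistent Z (h s)) \<Longrightarrow>
    spectral_calculus_consistent Z (\<lambda>x. \<Sum>s\<in>A. h s x)"
  by (induction A rule: finite_induct)
    (auto intro: spectral_calculus_consistent_add spectral_calculus_consistent_const)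

lemma spectral_calculus_consistent_prod:
  "finite A \<Longrightarrow> (\<And>s. s \<in> A \<Longrightarrow> spectral_calculus_consistent Z (h s)) \<Longrightarrow>
    spectral_calculus_consistent Z (\<lambda>x. \<Prod>s\<in>A. h s x)"
  by (induction A rule: finite_induct)
    (auto intro: spectral_calculus_consistent_mult spectral_calculus_consistent_const)

lemma spectral_calculus_consistent_affine: "spectral_calculus_consistent Z (\<lambda>x. (x - t) / c)"
proof -
  have "spectral_calculus_consistent Z (\<lambda>x. 1 / c * x + - t / c)"
    by (intro spectral_calculus_consistent_add spectral_calculus_consistent_mult
        spectral_calculus_consistent_const spectral_calculus_consistent_ident)
  then show ?thesis
    by (simp add: diff_divide_distrib)
qed

lemma spectral_calculus_consistent_interpolant:
  fixes g :: "real \<Rightarrow> real"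
  assumes "finite K"
  obtains f where "spectral_calculus_consistent Z f" and "\<And>x. x \<in> K \<Longrightarrow> f x = g x"
proof
  define f where "f x = (\<Sum>s\<in>K. g s * (\<Prod>t\<in>K-{s}. (x - t) / (s - t)))" for x
  show "spectral_calculus_consistent Z f"
    unfolding f_def using assms
    by (intro spectral_calculus_consistent_sum spectral_calculus_consistent_mult
        spectral_calculus_consistent_const spectral_calculus_consistent_prod
        spectral_calculus_consistent_affine finite_Diff)
  fix x assume "x \<in> K"
  have "(\<Prod>t\<in>K-{s}. (x - t) / (s - t)) = (if s = x then 1 else 0)" if "s \<in> K" for s
    using \<open>x \<in> K\<close> that assms by (auto intro: prod.neutral)
  then have "f x = (\<Sum>s\<in>K. if s = x then g s else 0)"
    unfolding f_def by (intro sum.cong) auto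
  with \<open>x \<in> K\<close> assms show "f x = g x"
    by simp
qed

lemma spectral_decomp_sum_eq:
  fixes g :: "real \<Rightarrow> real"
  assumes "spectral_decomp Z U l" and "spectral_decomp Z V m"
  shows "(\<Sum>i\<in>UNIV. g (l$i)) = (\<Sum>i\<in>UNIV. g (m$i))"
proof -
  obtain f where f: "spectral_calculus_consistent Z f"
    and fg: "\<And>x. x \<in> range (\<lambda>i. l$i) \<union> range (\<lambda>i. m$i) \<Longrightarrow> f x = g x"
    using spectral_calculus_consistent_interpolant[of "range (\<lambda>i. l$i) \<union> range (\<lambda>i. m$i)"] by auto
  have eq: "U ** diag_fun f l ** adjoint_mat U = V ** diag_fun f m ** adjoint_mat V"
    using f assms unfolding spectral_calculus_consistent_def by blast
  have "unitary_mat U" and "unitary_mat V"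
    using assms by (simp_all add: spectral_decomp_def)
  then have "complex_of_real (\<Sum>i\<in>UNIV. f (l$i)) = complex_of_real (\<Sum>i\<in>UNIV. f (m$i))"
    using arg_cong[OF eq, of trace] unfolding diag_fun_def
    by (simp only: trace_unitary_conj_diag vec_lambda_beta)
  then show ?thesis
    using fg by (simp only: of_real_eq_iff) (simp add: cong: sum.cong)
qed

lemma nuc_norm_spectral_decomp:
  assumes "spectral_decomp Z U l"
  shows "nuc_norm Z = (\<Sum>i\<in>UNIV. \<bar>l$i\<bar>)"
  unfolding nuc_norm_def
proof (rule the_equality)
  fix s
  assume "\<exists>V m. spectral_decomp Z V m \<and> s = (\<Sum>i\<in>UNIV. \<bar>m$i\<bar>)"
  then show "s = (\<Sum>i\<in>UNIV. \<bar>l$i\<bar>)"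
    using spectral_decomp_sum_eq[OF assms, where g=abs] by metis
qed (use assms in blast)

lemma nuc_norm_unitary_conj_diag:
  "unitary_mat U \<Longrightarrow> nuc_norm (U ** diag_mat l ** adjoint_mat U) = (\<Sum>i\<in>UNIV. \<bar>l$i\<bar>)"
  by (rule nuc_norm_spectral_decomp) (simp add: spectral_decomp_def)

lemma frob_norm_sq_trace: "complex_of_real ((frob_norm Z)\<^sup>2) = trace (Z ** adjoint_mat Z)"
proof -
  have "(frob_norm Z)\<^sup>2 = (\<Sum>i\<in>UNIV. \<Sum>j\<in>UNIV. (cmod (Z $ i $ j))\<^sup>2)"
    unfolding frob_norm_def by (simp add: sum_nonneg)
  moreover have "(complex_of_real (cmod z))\<^sup>2 = z * cnj z" for z
    by (metis complex_norm_square of_real_power)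
  ultimately show ?thesis
    by (simp add: trace_def matrix_matrix_mult_def adjoint_mat_def)
qed

lemma frob_norm_unitary_conj_diag:
  assumes "unitary_mat U"
  shows "frob_norm (U ** diag_mat l ** adjoint_mat U) = sqrt (\<Sum>i\<in>UNIV. (l$i)\<^sup>2)"
proof -
  let ?Z = "U ** diag_mat l ** adjoint_mat U"
  have "adjoint_mat ?Z = ?Z"
    by (simp add: adjoint_mat_mult adjoint_mat_adjoint_mat adjoint_diag_mat matrix_mul_assoc)
  then have "?Z ** adjoint_mat ?Z = U ** (diag_mat l ** diag_mat l) ** adjoint_mat U"
    using unitary_conj_matrix_mult[OF assms] by simp
  also have "\<dots> = U ** diag_mat (\<chi> i. (l$i)\<^sup>2) ** adjoint_mat U"
    by (simp add: diag_mat_mult power2_eq_square)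
  finally have "?Z ** adjoint_mat ?Z = U ** diag_mat (\<chi> i. (l$i)\<^sup>2) ** adjoint_mat U" .
  then have "(frob_norm ?Z)\<^sup>2 = (\<Sum>i\<in>UNIV. (l$i)\<^sup>2)"
    using frob_norm_sq_trace[of ?Z] trace_unitary_conj_diag[OF assms, of "\<chi> i. (l$i)\<^sup>2"]
    by (simp del: of_real_sum of_real_power)
  moreover have "frob_norm ?Z \<ge> 0"
    unfolding frob_norm_def by (simp add: sum_nonneg)
  ultimately show ?thesis
    by (metis real_sqrt_abs abs_of_nonneg)
qed

lemma sum_restricted_vec:
  assumes "f 0 = 0"
  shows "(\<Sum>i\<in>UNIV. f ((\<chi> i. if i \<in> S then l$i else 0) $ i)) = (\<Sum>i\<in>S. f (l$i))"
  using assms by (simp add: if_distrib sum.If_cases)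

lemma sum_abs_le_sqrt_card_mult_sqrt_sum_squares:
  fixes f :: "'a \<Rightarrow> real"
  shows "(\<Sum>i\<in>S. \<bar>f i\<bar>) \<le> sqrt (card S) * sqrt (\<Sum>i\<in>S. (f i)\<^sup>2)"
proof -
  have "(\<Sum>i\<in>S. \<bar>f i\<bar>)\<^sup>2 \<le> card S * (\<Sum>i\<in>S. (f i)\<^sup>2)"
    using sum_squared_le_sum_of_squares[of "\<lambda>i. \<bar>f i\<bar>" S] by (simp add: mult.commute)
  then show ?thesis
    by (simp add: real_le_rsqrt sum_nonneg flip: real_sqrt_mult)
qed

lemma cone_condition_ratio_bound:
  fixes \<rho> r a b s F :: real
  assumes "0 < \<rho>" and "0 < r" and "0 \<le> a" and "0 \<le> b" and "0 < F" and "s \<le> F"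
    and "a \<le> sqrt r * s" and "\<rho> / sqrt r * b < s"
  shows "(a + b)\<^sup>2 / F\<^sup>2 \<le> ((\<rho> + 1) / \<rho>)\<^sup>2 * r"
proof -
  have "\<rho> * b < sqrt r * s"
    using assms(2,8) by (simp add: field_simps)
  moreover have "\<rho> * a \<le> \<rho> * (sqrt r * s)"
    using assms(1,7) by simp
  ultimately have "\<rho> * (a + b) \<le> (\<rho> + 1) * sqrt r * s"
    by (simp add: algebra_simps)
  also have "\<dots> \<le> (\<rho> + 1) * sqrt r * F"
    using assms(1,2,6) by (intro mult_left_mono) auto
  finally have "(a + b) / F \<le> (\<rho> + 1) / \<rho> * sqrt r"
    using assms(1,5) by (simp add: field_simps)
  then have "((a + b) / F)\<^sup>2 \<le> ((\<rho> + 1) / \<rho> * sqrt r)\<^sup>2"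
    using assms(3-5) by (intro power_mono) auto
  then show ?thesis
    using assms(2) by (simp add: power_divide power_mult_distrib)
qed

lemma eig_truncation_norms:
  fixes Z Zr :: "complex^'n^'n"
  assumes "eig_truncation r Z Zr"
  obtains l :: "real^'n" and S where "card S = r"
    and "nuc_norm Z = (\<Sum>i\<in>S. \<bar>l$i\<bar>) + (\<Sum>i\<in>-S. \<bar>l$i\<bar>)"
    and "nuc_norm (Z - Zr) = (\<Sum>i\<in>-S. \<bar>l$i\<bar>)"
    and "frob_norm Zr = sqrt (\<Sum>i\<in>S. (l$i)\<^sup>2)"
    and "frob_norm Zr \<le> frob_norm Z"
proof -
  obtain U l S where U: "unitary_mat U" and "card S = r"
    and Z: "Z = U ** diag_mat l ** adjoint_mat U"
    and Zr: "Zr = U ** diag_mat (\<chi> i. if i \<in> S then l$i else 0) ** adjoint_mat U"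
    using assms by (auto simp: eig_truncation_def spectral_decomp_def)
  have "l - (\<chi> i. if i \<in> S then l$i else 0) = (\<chi> i. if i \<in> -S then l$i else 0)"
    by (simp add: vec_eq_iff)
  then have Zc: "Z - Zr = U ** diag_mat (\<chi> i. if i \<in> -S then l$i else 0) ** adjoint_mat U"
    by (simp add: Z Zr matrix_diff_conj diag_mat_diff)
  have "nuc_norm Z = (\<Sum>i\<in>S. \<bar>l$i\<bar>) + (\<Sum>i\<in>-S. \<bar>l$i\<bar>)"
    using sum.subset_diff[of S UNIV "\<lambda>i. \<bar>l$i\<bar>"]
    by (simp add: Z nuc_norm_unitary_conj_diag[OF U] Compl_eq_Diff_UNIV add.commute)
  moreover have "nuc_norm (Z - Zr) = (\<Sum>i\<in>-S. \<bar>l$i\<bar>)"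
    unfolding Zc nuc_norm_unitary_conj_diag[OF U] by (rule sum_restricted_vec) simp
  moreover have Zr_norm: "frob_norm Zr = sqrt (\<Sum>i\<in>S. (l$i)\<^sup>2)"
    unfolding Zr frob_norm_unitary_conj_diag[OF U] by (subst sum_restricted_vec) simp_all
  moreover have "frob_norm Zr \<le> frob_norm Z"
    unfolding Zr_norm Z frob_norm_unitary_conj_diag[OF U] by (intro real_sqrt_le_mono sum_mono2) auto
  ultimately show ?thesis
    by (rule that[OF \<open>card S = r\<close>])
qed

theorem lemma1:
  fixes \<rho> :: real and r :: nat and Z :: "complex^'n^'n"
  assumes "0 < \<rho>" and "\<rho> < 1"
    and "1 \<le> r" and "r \<le> CARD('n)"
    and "Z \<in> T_set \<rho> r"
  shows "(nuc_norm Z)\<^sup>2 / (frob_norm Z)\<^sup>2 \<le> ((\<rho> + 1) / \<rho>)\<^sup>2 * real r"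
proof -
  obtain Zr where fZ: "frob_norm Z = 1" and "eig_truncation r Z Zr"
    and cone: "\<rho> / sqrt (real r) * nuc_norm (Z - Zr) < frob_norm Zr"
    using assms(5) by (auto simp: T_set_def)
  obtain l :: "real^'n" and S where "card S = r"
    and nuc: "nuc_norm Z = (\<Sum>i\<in>S. \<bar>l$i\<bar>) + (\<Sum>i\<in>-S. \<bar>l$i\<bar>)"
    and nuc_c: "nuc_norm (Z - Zr) = (\<Sum>i\<in>-S. \<bar>l$i\<bar>)"
    and Zr_norm: "frob_norm Zr = sqrt (\<Sum>i\<in>S. (l$i)\<^sup>2)"
    and Zr_le: "frob_norm Zr \<le> frob_norm Z"
    using \<open>eig_truncation r Z Zr\<close> by (rule eig_truncation_norms)
  have cauchy_schwarz: "(\<Sum>i\<in>S. \<bar>l$i\<bar>) \<le> sqrt r * frob_norm Zr"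
    using sum_abs_le_sqrt_card_mult_sqrt_sum_squares[of "\<lambda>i. l$i" S] \<open>card S = r\<close> Zr_norm by simp
  show ?thesis
    unfolding nuc
    by (rule cone_condition_ratio_bound[OF assms(1), where s = "frob_norm Zr"])
      (use assms(3) fZ cone nuc_c Zr_le cauchy_schwarz in \<open>simp_all add: sum_nonneg\<close>)
qed

end
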